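(* For real $\alpha>0$ and $\beta>0$ define $$f(\alpha,\beta)=\sum_{n=-\infty}^{\infty}\frac{\alpha(-1)^n}{\sqrt{\alpha^2n^2+\alpha\beta^2}\,\sinh\!\left(\pi\sqrt{\alpha^2n^2+\alpha\beta^2}\right)}.$$ Then $f(\alpha,\beta)=f(1/\alpha,\beta)$.
   Context: The series converges absolutely. *)

theory Defs
  imports "HOL-Analysis.Analysis"
begin

text \<open>The bilateral series f(alpha,beta), summed over all integers n
  (absolutely convergent, so the unordered sum infsum is the bilateral sum).\<close>
definition f :: "real \<Rightarrow> real \<Rightarrow> real" where
  "f \<alpha> \<beta> = (\<Sum>\<^sub>\<infinity>n::int.
      \<alpha> * (-1) powi n /
      (sqrt (\<alpha>^2 * (of_int n)^2 + \<alpha> * \<beta>^2) *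
       sinh (pi * sqrt (\<alpha>^2 * (of_int n)^2 + \<alpha> * \<beta>^2))))"

end

theory Submission
  imports Defs
begin

text \<open>Since \<open>\<Sum>\<^sub>k (-1)^k / (t^2 + k^2) = \<pi> / (t sinh (\<pi> t))\<close>, both \<open>f \<alpha> \<beta>\<close> and
  \<open>f (1/\<alpha>) \<beta>\<close> equal \<open>1/\<pi>\<close> times an iterated sum of the double series
  \<open>(-1)^(n+k) / (\<alpha> n^2 + k^2/\<alpha> + \<beta>^2)\<close> over \<open>(n,k) \<in> \<int>\<^sup>2\<close>, summed in the two possible
  orders. The double series is not absolutely convergent, but its 2\<times>2 blocks are: a block is a
  mixed second difference of \<open>1/(\<alpha> x^2 + y^2/\<alpha> + \<beta>^2)\<close> and is \<open>O(1/((1+m^2)(1+j^2)))\<close>.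
  Grouping rows and columns in pairs therefore lets the two iterated sums be exchanged. The closed
  form of the inner series comes from the partial fraction expansion of \<open>\<pi> cot (\<pi> z)\<close>, which
  follows from the reflection formula for the digamma function.\<close>

subsection \<open>Infinite sums over the integers\<close>

lemma has_sum_diff:
  fixes f g :: "'a \<Rightarrow> 'b::topological_ab_group_add"
  assumes "(f has_sum a) A" and "(g has_sum b) A"
  shows "((\<lambda>x. f x - g x) has_sum (a - b)) A"
proof -
  have "((\<lambda>x. - g x) has_sum (- b)) A" using assms(2) by (simp add: has_sum_uminus)
  from has_sum_add[OF assms(1) this] show ?thesis by simp
qed

lemma has_sum_int_from_nat:
  fixes g :: "int \<Rightarrow> 'a::topological_comm_monoid_add"
  assumes "((\<lambda>k. g (int k + 1)) has_sum b) UNIV" and "((\<lambda>k. g (- (int k + 1))) has_sum c) UNIV"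
  shows "(g has_sum (g 0 + b + c)) UNIV"
proof -
  have pos: "(g has_sum b) (range (\<lambda>k::nat. int k + 1))"
    using assms(1) by (subst has_sum_reindex) (auto simp: inj_def o_def)
  have neg: "(g has_sum c) (range (\<lambda>k::nat. - (int k + 1)))"
    using assms(2) by (subst has_sum_reindex) (auto simp: inj_def o_def)
  have "(g has_sum (g 0 + b + c)) ({0} \<union> range (\<lambda>k::nat. int k + 1) \<union> range (\<lambda>k::nat. - (int k + 1)))"
    by (intro has_sum_Un_disjoint pos neg has_sum_finiteI) auto
  also have "{0} \<union> range (\<lambda>k::nat. int k + 1) \<union> range (\<lambda>k::nat. - (int k + 1)) = UNIV"
  proof -
    have "j \<in> range (\<lambda>k::nat. int k + 1) \<union> range (\<lambda>k::nat. - (int k + 1))" if "j \<noteq> 0" for j :: int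
    proof (cases "j > 0")
      case True
      hence "j = int (nat (j - 1)) + 1" by simp
      thus ?thesis by blast
    next
      case False
      with that have "j = - (int (nat (- j - 1)) + 1)" by simp
      thus ?thesis by blast
    qed
    thus ?thesis by blast
  qed
  finally show ?thesis .
qed

lemma has_sum_pairs_int:
  fixes g :: "int \<Rightarrow> 'a::banach"
  assumes "(g has_sum S) UNIV"
  shows "((\<lambda>m. g (2 * m) + g (2 * m + 1)) has_sum S) UNIV"
proof -
  define Ev where "Ev = range (\<lambda>m::int. 2 * m)"
  define Od where "Od = range (\<lambda>m::int. 2 * m + 1)"
  have "g summable_on UNIV" using assms by (auto simp: has_sum_iff)
  hence ev: "(g has_sum infsum g Ev) Ev" and od: "(g has_sum infsum g Od) Od"
    by (auto intro!: has_sum_infsum intro: summable_on_subset_banach)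
  have "Ev \<inter> Od = {}" unfolding Ev_def Od_def by (auto, presburger)
  moreover have "Ev \<union> Od = UNIV"
  proof -
    have "j \<in> Ev \<union> Od" for j :: int
      by (cases "even j") (auto simp: Ev_def Od_def elim!: evenE oddE)
    thus ?thesis by blast
  qed
  ultimately have "(g has_sum (infsum g Ev + infsum g Od)) UNIV"
    using has_sum_Un_disjoint[OF ev od] by simp
  hence "S = infsum g Ev + infsum g Od" using assms has_sum_unique by blast
  moreover have "((\<lambda>m. g (2 * m)) has_sum infsum g Ev) UNIV"
    using ev unfolding Ev_def by (subst (asm) has_sum_reindex) (auto simp: inj_def o_def)
  moreover have "((\<lambda>m. g (2 * m + 1)) has_sum infsum g Od) UNIV"
    using od unfolding Od_def by (subst (asm) has_sum_reindex) (auto simp: inj_def o_def)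
  ultimately show ?thesis by (simp add: has_sum_add)
qed

lemma summable_on_abs_bound:
  fixes g h :: "'a \<Rightarrow> real"
  assumes "h summable_on A" and "\<And>x. x \<in> A \<Longrightarrow> \<bar>g x\<bar> \<le> h x"
  shows "g summable_on A"
proof -
  have "(\<lambda>x. norm (g x)) summable_on A"
    using assms by (intro summable_on_comparison_test[OF assms(1)]) auto
  thus ?thesis by (subst summable_on_iff_abs_summable_on_real)
qed

lemma summable_on_product_nonneg:
  fixes u v :: "'a \<Rightarrow> real"
  assumes "u summable_on UNIV" and "v summable_on UNIV" and "\<And>x. u x \<ge> 0" and "\<And>y. v y \<ge> 0"
  shows "(\<lambda>(x, y). u x * v y) summable_on UNIV"
proof -
  have "(\<lambda>(x, y). u x * v y) summable_on Sigma UNIV (\<lambda>_. UNIV)"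
  proof (rule summable_on_SigmaI)
    show "((\<lambda>y. (\<lambda>(x, y). u x * v y) (x, y)) has_sum u x * infsum v UNIV) UNIV" for x
      using has_sum_cmult_right[OF has_sum_infsum[OF assms(2)], of "u x"] by simp
    show "(\<lambda>x. u x * infsum v UNIV) summable_on UNIV"
      using assms(1) by (rule summable_on_cmult_left)
  qed (use assms(3,4) in auto)
  thus ?thesis by simp
qed

definition block_sum :: "(int \<Rightarrow> int \<Rightarrow> 'a::plus) \<Rightarrow> int \<Rightarrow> int \<Rightarrow> 'a" where
  "block_sum s m j = (s (2 * m) (2 * j) + s (2 * m) (2 * j + 1))
                     + (s (2 * m + 1) (2 * j) + s (2 * m + 1) (2 * j + 1))"

lemma infsum_rows_eq_infsum_block_rows:
  fixes s :: "int \<Rightarrow> int \<Rightarrow> 'a::banach"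
  assumes "\<And>n. s n summable_on UNIV"
    and "(\<lambda>n. \<Sum>\<^sub>\<infinity>k. s n k) summable_on UNIV"
  shows "(\<Sum>\<^sub>\<infinity>n. \<Sum>\<^sub>\<infinity>k. s n k) = (\<Sum>\<^sub>\<infinity>m. \<Sum>\<^sub>\<infinity>j. block_sum s m j)"
proof -
  define R where "R n = (\<Sum>\<^sub>\<infinity>k. s n k)" for n
  have "((\<lambda>j. s n (2 * j) + s n (2 * j + 1)) has_sum R n) UNIV" for n
    using has_sum_pairs_int[of "s n"] assms(1)[of n] unfolding R_def by simp
  hence "((\<lambda>j. block_sum s m j) has_sum (R (2 * m) + R (2 * m + 1))) UNIV" for m
    unfolding block_sum_def by (intro has_sum_add)
  hence "(\<Sum>\<^sub>\<infinity>j. block_sum s m j) = R (2 * m) + R (2 * m + 1)" for m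
    by (rule infsumI)
  moreover have "((\<lambda>m. R (2 * m) + R (2 * m + 1)) has_sum infsum R UNIV) UNIV"
    using has_sum_pairs_int[of R] assms(2) unfolding R_def by simp
  ultimately show ?thesis unfolding R_def by (simp add: infsumI)
qed

lemma infsum_swap_by_blocks:
  fixes s :: "int \<Rightarrow> int \<Rightarrow> 'a::banach"
  assumes "\<And>n. s n summable_on UNIV" and "\<And>k. (\<lambda>n. s n k) summable_on UNIV"
    and "(\<lambda>n. \<Sum>\<^sub>\<infinity>k. s n k) summable_on UNIV" and "(\<lambda>k. \<Sum>\<^sub>\<infinity>n. s n k) summable_on UNIV"
    and "(\<lambda>(m, j). block_sum s m j) summable_on UNIV"
  shows "(\<Sum>\<^sub>\<infinity>n. \<Sum>\<^sub>\<infinity>k. s n k) = (\<Sum>\<^sub>\<infinity>k. \<Sum>\<^sub>\<infinity>n. s n k)"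
proof -
  have "block_sum (\<lambda>k n. s n k) j m = block_sum s m j" for j m
    by (simp add: block_sum_def add_ac)
  moreover have "(\<Sum>\<^sub>\<infinity>k. \<Sum>\<^sub>\<infinity>n. s n k) = (\<Sum>\<^sub>\<infinity>j. \<Sum>\<^sub>\<infinity>m. block_sum (\<lambda>k n. s n k) j m)"
    using assms(2,4) by (rule infsum_rows_eq_infsum_block_rows)
  moreover have "(\<Sum>\<^sub>\<infinity>m. \<Sum>\<^sub>\<infinity>j. block_sum s m j) = (\<Sum>\<^sub>\<infinity>j. \<Sum>\<^sub>\<infinity>m. block_sum s m j)"
    using assms(5) by (intro infsum_swap_banach) simp
  ultimately show ?thesis
    using infsum_rows_eq_infsum_block_rows[OF assms(1,3)] by simp
qed

subsection \<open>Partial fractions for cot and coth\<close>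

lemma Digamma_reflection:
  fixes z :: complex
  assumes "z \<notin> \<int>"
  shows "Digamma (1 - z) - Digamma z = of_real pi * cot (of_real pi * z)"
proof -
  have "1 - z \<notin> \<int>" using assms Ints_diff[of 1 "1 - z"] by auto
  hence nonpos: "z \<notin> \<int>\<^sub>\<le>\<^sub>0" "1 - z \<notin> \<int>\<^sub>\<le>\<^sub>0" using assms nonpos_Ints_subset_Ints by auto
  have sin_nz: "sin (of_real pi * z) \<noteq> 0" using assms by (subst sin_eq_0) auto
  have "((\<lambda>w. Gamma w * Gamma (1 - w)) has_field_derivative
          Gamma z * Gamma (1 - z) * (Digamma z - Digamma (1 - z))) (at z)"
    using nonpos by (auto intro!: derivative_eq_intros simp: algebra_simps)
  moreover have "((\<lambda>w. of_real pi / sin (of_real pi * w)) has_field_derivative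
          - (of_real pi * cos (of_real pi * z) * of_real pi) / (sin (of_real pi * z))\<^sup>2) (at z)"
    using sin_nz by (auto intro!: derivative_eq_intros simp: power2_eq_square)
  moreover have "(\<lambda>w::complex. Gamma w * Gamma (1 - w)) = (\<lambda>w. of_real pi / sin (of_real pi * w))"
    using Gamma_reflection_complex by blast
  ultimately have "Gamma z * Gamma (1 - z) * (Digamma z - Digamma (1 - z))
      = - (of_real pi * cos (of_real pi * z) * of_real pi) / (sin (of_real pi * z))\<^sup>2"
    using DERIV_unique by metis
  hence "of_real pi / sin (of_real pi * z) * (Digamma z - Digamma (1 - z))
      = of_real pi / sin (of_real pi * z) * (- of_real pi * cot (of_real pi * z))"
    by (simp add: Gamma_reflection_complex cot_def power2_eq_square)
  moreover have "of_real pi / sin (of_real pi * z) \<noteq> 0" using sin_nz by simp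
  ultimately have "Digamma z - Digamma (1 - z) = - of_real pi * cot (of_real pi * z)"
    by (rule mult_left_cancel[THEN iffD1, rotated])
  thus ?thesis by (simp add: algebra_simps)
qed

lemma cot_partial_fractions_paired:
  fixes z :: complex
  assumes z: "z \<notin> \<int>"
  shows "(\<lambda>k. inverse (z + of_nat k) - inverse (1 - z + of_nat k)) sums (of_real pi * cot (of_real pi * z))"
proof -
  define d where "d w k = inverse (of_nat (Suc k)) - inverse (w + of_nat k)" for w :: complex and k
  have "z \<noteq> 0" and "1 - z \<noteq> 0" using z by auto
  hence "(\<lambda>k. d (1 - z) k - d z k) sums (suminf (d (1 - z)) - suminf (d z))"
    using summable_Digamma[of z] summable_Digamma[of "1 - z"]
    unfolding d_def by (intro sums_diff summable_sums) auto
  also have "suminf (d (1 - z)) - suminf (d z) = Digamma (1 - z) - Digamma z"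
    unfolding d_def Digamma_def by simp
  finally show ?thesis by (simp add: d_def Digamma_reflection[OF z])
qed

lemma cot_partial_fractions:
  fixes z :: complex
  assumes z: "z \<notin> \<int>"
  shows "(\<lambda>k. 2 * z / (z\<^sup>2 - (of_nat k + 1)\<^sup>2)) sums (of_real pi * cot (of_real pi * z) - 1 / z)"
proof -
  have z_plus: "z + of_nat n \<noteq> 0" for n :: nat
  proof
    assume "z + of_nat n = 0"
    hence "z = - of_nat n" by (simp add: eq_neg_iff_add_eq_0)
    thus False using z by simp
  qed
  have z_minus: "z - of_nat n \<noteq> 0" for n :: nat
    using z by auto
  have partial_sums: "(\<Sum>k<N. 2 * z / (z\<^sup>2 - (of_nat k + 1)\<^sup>2)) =
      (\<Sum>k<N. inverse (z + of_nat k) - inverse (1 - z + of_nat k)) - 1 / z + inverse (z + of_nat N)"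
    for N
  proof (induction N)
    case 0
    thus ?case using z_plus[of 0] by (simp add: divide_inverse)
  next
    case (Suc N)
    have "2 * z / (z\<^sup>2 - (of_nat N + 1)\<^sup>2) = inverse (z + of_nat (Suc N)) + inverse (z - of_nat (Suc N))"
      using z_plus[of "Suc N"] z_minus[of "Suc N"] by (simp add: field_simps power2_eq_square)
    moreover have "inverse (1 - z + of_nat N) = - inverse (z - of_nat (Suc N))"
      using inverse_minus_eq[of "z - of_nat (Suc N)"] by (simp add: algebra_simps)
    ultimately show ?case using Suc by simp
  qed
  have "(\<lambda>N. (\<Sum>k<N. inverse (z + of_nat k) - inverse (1 - z + of_nat k)) - 1 / z + inverse (z + of_nat N))
        \<longlonglongrightarrow> of_real pi * cot (of_real pi * z) - 1 / z + 0"
    using cot_partial_fractions_paired[OF z] unfolding sums_def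
    by (intro tendsto_intros filterlim_compose[OF tendsto_inverse_0]
              tendsto_add_filterlim_at_infinity[OF tendsto_const] tendsto_of_nat)
  thus ?thesis unfolding sums_def partial_sums by simp
qed

lemma coth_partial_fractions:
  fixes t :: real
  assumes t: "t > 0"
  shows "(\<lambda>k. 2 * t / (t\<^sup>2 + (real k + 1)\<^sup>2)) sums (pi * cosh (pi * t) / sinh (pi * t) - 1 / t)"
proof -
  define z where "z = \<i> * complex_of_real t"
  have "z \<notin> \<int>" using t by (simp add: z_def complex_is_Int_iff)
  from sums_mult[OF cot_partial_fractions[OF this], of \<i>]
  have "(\<lambda>k. \<i> * (2 * z / (z\<^sup>2 - (of_nat k + 1)\<^sup>2)))
          sums (\<i> * (of_real pi * cot (of_real pi * z) - 1 / z))" .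
  moreover have "\<i> * (2 * z / (z\<^sup>2 - (of_nat k + 1)\<^sup>2)) = of_real (2 * t / (t\<^sup>2 + (real k + 1)\<^sup>2))"
    for k
  proof -
    have "z\<^sup>2 - (of_nat k + 1)\<^sup>2 = of_real (- (t\<^sup>2 + (real k + 1)\<^sup>2))"
      by (simp add: z_def power2_eq_square algebra_simps)
    moreover have "\<i> * (2 * z) = of_real (- (2 * t))" by (simp add: z_def)
    ultimately have "\<i> * (2 * z / (z\<^sup>2 - (of_nat k + 1)\<^sup>2))
        = of_real (- (2 * t) / - (t\<^sup>2 + (real k + 1)\<^sup>2))"
      by (metis of_real_divide times_divide_eq_right)
    thus ?thesis by (simp only: minus_divide_divide)
  qed
  moreover have "\<i> * (of_real pi * cot (of_real pi * z) - 1 / z)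
      = of_real (pi * cosh (pi * t) / sinh (pi * t) - 1 / t)"
  proof -
    have pi_z: "of_real pi * z = \<i> * of_real (pi * t)" by (simp add: z_def mult.left_commute)
    have sin_i: "sin (\<i> * complex_of_real x) = \<i> * of_real (sinh x)"
      and cos_i: "cos (\<i> * complex_of_real x) = of_real (cosh x)" for x
      by (simp_all add: sin_i_times cos_i_times exp_of_real sinh_field_def cosh_field_def exp_minus)
    have "cot (of_real pi * z) = of_real (cosh (pi * t)) / (\<i> * of_real (sinh (pi * t)))"
      unfolding cot_def pi_z sin_i cos_i ..
    thus ?thesis using t by (simp add: z_def field_simps)
  qed
  ultimately show ?thesis by (simp only: sums_of_real_iff)
qed

lemma has_sum_inverse_square_plus:
  fixes t :: real
  assumes t: "t > 0"
  shows "((\<lambda>j::int. 1 / (t\<^sup>2 + (of_int j)\<^sup>2)) has_sum (pi * cosh (pi * t) / (t * sinh (pi * t)))) UNIV"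
proof -
  define S where "S = (pi * cosh (pi * t) / sinh (pi * t) - 1 / t) / (2 * t)"
  have "(\<lambda>k. 2 * t / (t\<^sup>2 + (real k + 1)\<^sup>2) / (2 * t)) sums S"
    unfolding S_def using coth_partial_fractions[OF t] by (rule sums_divide)
  hence "(\<lambda>k. 1 / (t\<^sup>2 + (real k + 1)\<^sup>2)) sums S" using t by simp
  hence "((\<lambda>k::nat. 1 / (t\<^sup>2 + (real k + 1)\<^sup>2)) has_sum S) UNIV"
    by (rule sums_nonneg_imp_has_sum) (simp add: add_nonneg_nonneg)
  hence "((\<lambda>j::int. 1 / (t\<^sup>2 + (of_int j)\<^sup>2)) has_sum (1 / (t\<^sup>2 + (of_int 0)\<^sup>2) + S + S)) UNIV"
    by (intro has_sum_int_from_nat) (simp_all add: power2_eq_square algebra_simps)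
  also have "1 / (t\<^sup>2 + (of_int 0)\<^sup>2) + S + S = pi * cosh (pi * t) / (t * sinh (pi * t))"
    using t by (simp add: S_def field_simps power2_eq_square)
  finally show ?thesis .
qed

lemma coth_half_minus_coth:
  fixes x :: real
  assumes "x > 0"
  shows "cosh (x / 2) / sinh (x / 2) - cosh x / sinh x = 1 / sinh x"
proof -
  have "sinh x = 2 * sinh (x / 2) * cosh (x / 2)" and "cosh x = cosh (x / 2) ^ 2 + sinh (x / 2) ^ 2"
    using sinh_double[of "x / 2"] cosh_double[of "x / 2"] by simp_all
  moreover have "sinh (x / 2) > 0" using assms by simp
  ultimately show ?thesis
    using hyperbolic_pythagoras[of "x / 2"] by (simp add: field_simps power2_eq_square)
qed

text \<open>Twice the sum over the even indices minus the full sum, both known from the previous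
  evaluation (at \<open>t/2\<close> and at \<open>t\<close>).\<close>

lemma has_sum_alternating_inverse_square_plus:
  fixes t :: real
  assumes t: "t > 0"
  shows "((\<lambda>j::int. (-1) powi j / (t\<^sup>2 + (of_int j)\<^sup>2)) has_sum (pi / (t * sinh (pi * t)))) UNIV"
proof -
  define h where "h j = 1 / (t\<^sup>2 + (of_int j)\<^sup>2)" for j :: int
  define E where "E = pi * cosh (pi * (t / 2)) / (t / 2 * sinh (pi * (t / 2))) / 4"
  have "4 * h (2 * j) = 1 / ((t / 2)\<^sup>2 + (of_int j)\<^sup>2)" for j
    using t by (simp add: h_def field_simps power2_eq_square add_pos_nonneg)
  hence "((\<lambda>j. 4 * h (2 * j)) has_sum (E * 4)) UNIV"
    unfolding E_def using has_sum_inverse_square_plus[of "t / 2"] t by (simp add: mult_ac)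
  hence "((\<lambda>j. h (2 * j)) has_sum E) UNIV"
    by (simp add: has_sum_cmult_right_iff)
  hence "(h has_sum E) (range (\<lambda>j::int. 2 * j))"
    by (subst has_sum_reindex) (auto simp: inj_def o_def)
  hence evens: "((\<lambda>j. if even j then h j else 0) has_sum E) UNIV"
    by (subst has_sum_cong_neutral[where T = "range (\<lambda>j::int. 2 * j)" and g = h])
      (auto elim!: evenE)
  have "((\<lambda>j. 2 * (if even j then h j else 0) - h j) has_sum
      (2 * E - pi * cosh (pi * t) / (t * sinh (pi * t)))) UNIV"
    unfolding h_def by (intro has_sum_diff has_sum_cmult_right evens[unfolded h_def]
      has_sum_inverse_square_plus t)
  moreover have "2 * E - pi * cosh (pi * t) / (t * sinh (pi * t))
      = (pi / t) * (cosh (pi * t / 2) / sinh (pi * t / 2) - cosh (pi * t) / sinh (pi * t))"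
    using t by (simp add: E_def field_simps)
  moreover have "2 * (if even j then h j else 0) - h j = (-1) powi j / (t\<^sup>2 + (of_int j)\<^sup>2)" for j
    by (simp add: h_def power_int_minus_left)
  ultimately show ?thesis using coth_half_minus_coth[of "pi * t"] t by simp
qed

lemma summable_on_inverse_quadratic:
  fixes p r :: real
  assumes "p > 0" and "r > 0"
  shows "(\<lambda>k::int. 1 / (p * (of_int k)\<^sup>2 + r)) summable_on UNIV"
proof -
  define t where "t = sqrt (r / p)"
  have "t > 0" and t2: "t\<^sup>2 = r / p" using assms by (simp_all add: t_def)
  from \<open>t > 0\<close> have "(\<lambda>k::int. 1 / (t\<^sup>2 + (of_int k)\<^sup>2)) summable_on UNIV"
    using has_sum_inverse_square_plus summable_on_def by blast
  hence "(\<lambda>k::int. 1 / p * (1 / (t\<^sup>2 + (of_int k)\<^sup>2))) summable_on UNIV"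
    by (rule summable_on_cmult_right)
  moreover have "1 / p * (1 / (t\<^sup>2 + (of_int k)\<^sup>2)) = 1 / (p * (of_int k)\<^sup>2 + r)" for k :: int
    using assms unfolding t2 by (simp add: field_simps)
  ultimately show ?thesis by simp
qed

lemma abs_pi_div_mult_sinh_le:
  fixes y :: real
  assumes "y > 0"
  shows "\<bar>pi / (y * sinh (pi * y))\<bar> \<le> 1 / y\<^sup>2"
proof -
  have "pi * y \<le> sinh (pi * y)"
    using real_le_x_sinh[of "pi * y"] assms by (simp add: sinh_field_def exp_minus)
  hence "pi / (y * sinh (pi * y)) \<le> pi / (y * (pi * y))"
    using assms by (intro divide_left_mono mult_left_mono) auto
  thus ?thesis using assms by (simp add: power2_eq_square)
qed

subsection \<open>The double series\<close>

lemma inverse_second_difference: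
  fixes q1 q2 q3 q4 :: real
  assumes "q1 > 0" "q2 > 0" "q3 > 0" "q4 > 0" and "q4 = q2 + q3 - q1"
  shows "1 / q1 - 1 / q3 - 1 / q2 + 1 / q4
       = (q2 - q1) * (q3 - q1) * (1 / (q2 * q3 * q4) + 1 / (q1 * q2 * q3))"
  using assms(1-4) by (simp add: field_simps) (simp add: assms(5) algebra_simps)

lemma inverse_triple_product_le:
  fixes p q r D :: real
  assumes "D > 0" "p \<ge> D" "q \<ge> D" "r \<ge> D"
  shows "1 / (p * q * r) \<le> 1 / D ^ 3"
proof -
  have "D * D * D \<le> p * q * r" using assms by (intro mult_mono) auto
  thus ?thesis using assms by (intro divide_left_mono) (auto simp: power3_eq_cube)
qed

lemma abs_linear_product_le:
  fixes x y :: real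
  shows "\<bar>(4 * x + 1) * (4 * y + 1)\<bar> \<le> 16 * (1 + x\<^sup>2 + y\<^sup>2)"
proof -
  have "\<bar>(4 * x + 1) * (4 * y + 1)\<bar> \<le> (4 * \<bar>x\<bar> + 1) * (4 * \<bar>y\<bar> + 1)"
    unfolding abs_mult by (intro mult_mono) auto
  also have "\<dots> \<le> 16 * (1 + \<bar>x\<bar>\<^sup>2 + \<bar>y\<bar>\<^sup>2)"
  proof -
    have "(4 * u + 1) * (4 * v + 1) \<le> 16 * (1 + u\<^sup>2 + v\<^sup>2)" for u v :: real
    proof -
      have "0 \<le> 8 * (u - v)\<^sup>2 + (2 * u - 1)\<^sup>2 + (2 * v - 1)\<^sup>2 + 4 * u\<^sup>2 + 4 * v\<^sup>2"
        by simp
      thus ?thesis by (simp add: power2_eq_square algebra_simps)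
    qed
    thus ?thesis .
  qed
  finally show ?thesis by simp
qed

lemma product_one_plus_squares_le:
  fixes x y :: real
  shows "(1 + x\<^sup>2) * (1 + y\<^sup>2) \<le> (1 + x\<^sup>2 + y\<^sup>2)\<^sup>2"
proof -
  have "0 \<le> x\<^sup>2 + y\<^sup>2 + (x\<^sup>2)\<^sup>2 + x\<^sup>2 * y\<^sup>2 + (y\<^sup>2)\<^sup>2" by simp
  thus ?thesis by (simp add: power2_eq_square algebra_simps)
qed

lemma square_le_square_double_plus_one: "(of_int m :: real)\<^sup>2 \<le> (2 * of_int m + 1)\<^sup>2"
proof -
  have "(2 * of_int m + 1)\<^sup>2 - (of_int m)\<^sup>2 = (3 * of_int m + 1) * (of_int m + (1::real))"
    by (simp add: power2_eq_square algebra_simps)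
  moreover have "(3 * of_int m + 1) * (of_int m + (1::real)) \<ge> 0"
    by (cases "m \<ge> 0") (auto intro: mult_nonneg_nonneg mult_nonpos_nonpos)
  ultimately show ?thesis by simp
qed

definition alt_inv_quadratic :: "real \<Rightarrow> real \<Rightarrow> real \<Rightarrow> int \<Rightarrow> int \<Rightarrow> real" where
  "alt_inv_quadratic a b c n k = (-1) powi n * (-1) powi k / (a * (of_int n)\<^sup>2 + b * (of_int k)\<^sup>2 + c)"

lemma alt_inv_quadratic_swap: "alt_inv_quadratic a b c n k = alt_inv_quadratic b a c k n"
  by (simp add: alt_inv_quadratic_def add_ac mult_ac)

lemma abs_block_sum_alt_inv_quadratic_le:
  fixes a b c :: real
  assumes a: "a > 0" and b: "b > 0" and c: "c > 0"
  defines "d \<equiv> min a (min b c)"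
  shows "\<bar>block_sum (alt_inv_quadratic a b c) m j\<bar>
           \<le> 32 * a * b / d ^ 3 * (1 / (1 + (of_int m)\<^sup>2) * (1 / (1 + (of_int j)\<^sup>2)))"
proof -
  define x y :: real where "x = of_int m" and "y = of_int j"
  define R where "R = 1 + x\<^sup>2 + y\<^sup>2"
  define Q where "Q u v = a * u\<^sup>2 + b * v\<^sup>2 + c" for u v :: real
  have d: "d > 0" "d \<le> a" "d \<le> b" "d \<le> c" using a b c by (simp_all add: d_def)
  have R: "R \<ge> 1" by (simp add: R_def)
  have Q_ge: "Q u v \<ge> d * R" if "x\<^sup>2 \<le> u\<^sup>2" "y\<^sup>2 \<le> v\<^sup>2" for u v
  proof -
    have "d * x\<^sup>2 \<le> a * u\<^sup>2" and "d * y\<^sup>2 \<le> b * v\<^sup>2"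
      using d that by (auto intro: mult_mono)
    thus ?thesis using d by (simp add: Q_def R_def algebra_simps)
  qed
  have x: "x\<^sup>2 \<le> (2 * x)\<^sup>2" "x\<^sup>2 \<le> (2 * x + 1)\<^sup>2" and y: "y\<^sup>2 \<le> (2 * y)\<^sup>2" "y\<^sup>2 \<le> (2 * y + 1)\<^sup>2"
    using square_le_square_double_plus_one[of m] square_le_square_double_plus_one[of j]
    by (simp_all add: x_def y_def power2_eq_square)
  define Q1 Q2 Q3 Q4 where "Q1 = Q (2 * x) (2 * y)" and "Q2 = Q (2 * x + 1) (2 * y)"
    and "Q3 = Q (2 * x) (2 * y + 1)" and "Q4 = Q (2 * x + 1) (2 * y + 1)"
  have Q1: "Q1 \<ge> d * R" and Q2: "Q2 \<ge> d * R" and Q3: "Q3 \<ge> d * R" and Q4: "Q4 \<ge> d * R"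
    unfolding Q1_def Q2_def Q3_def Q4_def using x y by (auto intro!: Q_ge)
  have dR: "d * R > 0" using d R by simp
  have "block_sum (alt_inv_quadratic a b c) m j = 1 / Q1 - 1 / Q3 - 1 / Q2 + 1 / Q4"
    by (simp add: block_sum_def alt_inv_quadratic_def Q1_def Q2_def Q3_def Q4_def Q_def x_def y_def
        power_int_minus_left)
  also have "\<dots> = (Q2 - Q1) * (Q3 - Q1) * (1 / (Q2 * Q3 * Q4) + 1 / (Q1 * Q2 * Q3))"
    using Q1 Q2 Q3 Q4 dR
    by (intro inverse_second_difference) (auto simp: Q1_def Q2_def Q3_def Q4_def Q_def)
  also have "(Q2 - Q1) * (Q3 - Q1) = a * b * ((4 * x + 1) * (4 * y + 1))"
    by (simp add: Q1_def Q2_def Q3_def Q_def power2_eq_square algebra_simps)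
  finally have "\<bar>block_sum (alt_inv_quadratic a b c) m j\<bar>
      = a * b * \<bar>(4 * x + 1) * (4 * y + 1)\<bar> * (1 / (Q2 * Q3 * Q4) + 1 / (Q1 * Q2 * Q3))"
    using a b Q1 Q2 Q3 Q4 dR by (simp add: abs_mult)
  also have "\<dots> \<le> a * b * (16 * R) * (1 / (d * R) ^ 3 + 1 / (d * R) ^ 3)"
    using a b Q1 Q2 Q3 Q4 dR abs_linear_product_le[of x y]
    by (intro mult_mono add_mono inverse_triple_product_le) (auto simp: R_def)
  also have "\<dots> = 32 * a * b / d ^ 3 * (1 / R\<^sup>2)"
    using d R by (simp add: field_simps power2_eq_square power3_eq_cube)
  also have "\<dots> \<le> 32 * a * b / d ^ 3 * (1 / (1 + x\<^sup>2) * (1 / (1 + y\<^sup>2)))"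
  proof -
    have "1 / R\<^sup>2 \<le> 1 / ((1 + x\<^sup>2) * (1 + y\<^sup>2))"
      using product_one_plus_squares_le[of x y] unfolding R_def[symmetric]
      using R by (intro divide_left_mono) (auto intro!: mult_pos_pos add_pos_nonneg)
    thus ?thesis using a b d by (intro mult_left_mono) auto
  qed
  finally show ?thesis by (simp add: x_def y_def)
qed

lemma summable_on_block_sum_alt_inv_quadratic:
  fixes a b c :: real
  assumes "a > 0" and "b > 0" and "c > 0"
  shows "(\<lambda>(m, j). block_sum (alt_inv_quadratic a b c) m j) summable_on UNIV"
proof (rule summable_on_abs_bound)
  define u where "u m = 1 / (1 + (of_int m)\<^sup>2 :: real)" for m :: int
  define K where "K = 32 * a * b / min a (min b c) ^ 3"
  have u: "u summable_on UNIV"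
    unfolding u_def using summable_on_inverse_quadratic[of 1 1] by (simp add: add.commute)
  have "(\<lambda>(m, j). u m * u j) summable_on UNIV"
    by (rule summable_on_product_nonneg[OF u u]) (simp_all add: u_def)
  thus "(\<lambda>(m, j). K * (u m * u j)) summable_on UNIV"
    using summable_on_cmult_right by (simp add: case_prod_unfold)
  show "\<bar>(\<lambda>(m, j). block_sum (alt_inv_quadratic a b c) m j) z\<bar> \<le> (\<lambda>(m, j). K * (u m * u j)) z" for z
    using abs_block_sum_alt_inv_quadratic_le[OF assms] unfolding K_def u_def by (cases z) simp
qed

lemma has_sum_alt_inv_quadratic_row:
  fixes a b c :: real and n :: int
  assumes a: "a > 0" and b: "b > 0" and c: "c > 0"
  defines "T \<equiv> sqrt ((a * (of_int n)\<^sup>2 + c) / b)"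
  shows "((\<lambda>k. alt_inv_quadratic a b c n k) has_sum ((-1) powi n / b * (pi / (T * sinh (pi * T))))) UNIV"
proof -
  have "(a * (of_int n)\<^sup>2 + c) / b > 0" using a b c by (simp add: add_nonneg_pos)
  hence T: "T > 0" "T\<^sup>2 = (a * (of_int n)\<^sup>2 + c) / b" by (simp_all add: T_def)
  have "((\<lambda>k. (-1) powi n / b * ((-1) powi k / (T\<^sup>2 + (of_int k)\<^sup>2)))
          has_sum ((-1) powi n / b * (pi / (T * sinh (pi * T))))) UNIV"
    by (intro has_sum_cmult_right has_sum_alternating_inverse_square_plus T)
  moreover have "(-1) powi n / b * ((-1) powi k / (T\<^sup>2 + (of_int k)\<^sup>2)) = alt_inv_quadratic a b c n k"
    for k
  proof -
    have "a * (of_int n)\<^sup>2 + b * (of_int k)\<^sup>2 + c > 0" using a b c by (simp add: add_nonneg_pos)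
    thus ?thesis using b unfolding T(2) alt_inv_quadratic_def by (simp add: field_simps)
  qed
  ultimately show ?thesis by simp
qed

lemma abs_infsum_alt_inv_quadratic_row_le:
  fixes a b c :: real
  assumes a: "a > 0" and b: "b > 0" and c: "c > 0"
  shows "\<bar>\<Sum>\<^sub>\<infinity>k. alt_inv_quadratic a b c n k\<bar> \<le> 1 / (a * (of_int n)\<^sup>2 + c)"
proof -
  define T where "T = sqrt ((a * (of_int n)\<^sup>2 + c) / b)"
  have "(a * (of_int n)\<^sup>2 + c) / b > 0" using a b c by (simp add: add_nonneg_pos)
  hence T: "T > 0" "T\<^sup>2 = (a * (of_int n)\<^sup>2 + c) / b" by (simp_all add: T_def)
  have "(\<Sum>\<^sub>\<infinity>k. alt_inv_quadratic a b c n k) = (-1) powi n / b * (pi / (T * sinh (pi * T)))"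
    using has_sum_alt_inv_quadratic_row[OF a b c] unfolding T_def by (rule infsumI)
  hence "\<bar>\<Sum>\<^sub>\<infinity>k. alt_inv_quadratic a b c n k\<bar> = 1 / b * \<bar>pi / (T * sinh (pi * T))\<bar>"
    using b by (simp add: abs_mult power_int_minus_left)
  also have "\<dots> \<le> 1 / b * (1 / T\<^sup>2)"
    using abs_pi_div_mult_sinh_le[OF T(1)] b by (intro mult_left_mono) auto
  also have "\<dots> = 1 / (a * (of_int n)\<^sup>2 + c)"
    using b unfolding T(2) by simp
  finally show ?thesis .
qed

lemma infsum_alt_inv_quadratic_swap:
  fixes a b c :: real
  assumes a: "a > 0" and b: "b > 0" and c: "c > 0"
  shows "(\<Sum>\<^sub>\<infinity>n. \<Sum>\<^sub>\<infinity>k. alt_inv_quadratic a b c n k) = (\<Sum>\<^sub>\<infinity>k. \<Sum>\<^sub>\<infinity>n. alt_inv_quadratic a b c n k)"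
proof (rule infsum_swap_by_blocks)
  have row: "alt_inv_quadratic p q c n summable_on UNIV" if "p > 0" "q > 0" for p q n
    using has_sum_alt_inv_quadratic_row[OF that c] by (auto simp: summable_on_def)
  have row_sums: "(\<lambda>n. \<Sum>\<^sub>\<infinity>k. alt_inv_quadratic p q c n k) summable_on UNIV" if "p > 0" "q > 0" for p q
    using summable_on_inverse_quadratic[OF that(1) c] abs_infsum_alt_inv_quadratic_row_le[OF that c]
    by (rule summable_on_abs_bound)
  show "alt_inv_quadratic a b c n summable_on UNIV" for n
    using row[OF a b] .
  show "(\<lambda>n. alt_inv_quadratic a b c n k) summable_on UNIV" for k
    using row[OF b a] by (simp add: alt_inv_quadratic_swap[of a b])
  show "(\<lambda>n. \<Sum>\<^sub>\<infinity>k. alt_inv_quadratic a b c n k) summable_on UNIV"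
    using row_sums[OF a b] .
  show "(\<lambda>k. \<Sum>\<^sub>\<infinity>n. alt_inv_quadratic a b c n k) summable_on UNIV"
    using row_sums[OF b a] by (simp add: alt_inv_quadratic_swap[of a b])
  show "(\<lambda>(m, j). block_sum (alt_inv_quadratic a b c) m j) summable_on UNIV"
    using summable_on_block_sum_alt_inv_quadratic[OF a b c] .
qed

lemma f_eq_infsum_alt_inv_quadratic:
  fixes \<alpha> \<beta> a b c :: real
  assumes a: "a > 0" and b: "b > 0" and c: "c > 0"
    and "\<alpha>\<^sup>2 = a / b" and "\<alpha> * \<beta>\<^sup>2 = c / b"
  shows "f \<alpha> \<beta> = \<alpha> * b / pi * (\<Sum>\<^sub>\<infinity>n. \<Sum>\<^sub>\<infinity>k. alt_inv_quadratic a b c n k)"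
proof -
  have "f \<alpha> \<beta> = (\<Sum>\<^sub>\<infinity>n. \<alpha> * b / pi * (\<Sum>\<^sub>\<infinity>k. alt_inv_quadratic a b c n k))"
    unfolding f_def
  proof (rule infsum_cong)
    fix n :: int
    define T where "T = sqrt ((a * (of_int n)\<^sup>2 + c) / b)"
    have "\<alpha>\<^sup>2 * (of_int n)\<^sup>2 + \<alpha> * \<beta>\<^sup>2 = (a * (of_int n)\<^sup>2 + c) / b"
      using assms(4,5) by (simp add: add_divide_distrib)
    hence "sqrt (\<alpha>\<^sup>2 * (of_int n)\<^sup>2 + \<alpha> * \<beta>\<^sup>2) = T" by (simp add: T_def)
    moreover have "(\<Sum>\<^sub>\<infinity>k. alt_inv_quadratic a b c n k) = (-1) powi n / b * (pi / (T * sinh (pi * T)))"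
      using has_sum_alt_inv_quadratic_row[OF a b c] unfolding T_def by (rule infsumI)
    ultimately show "\<alpha> * (-1) powi n / (sqrt (\<alpha>\<^sup>2 * (of_int n)\<^sup>2 + \<alpha> * \<beta>\<^sup>2)
          * sinh (pi * sqrt (\<alpha>\<^sup>2 * (of_int n)\<^sup>2 + \<alpha> * \<beta>\<^sup>2)))
        = \<alpha> * b / pi * (\<Sum>\<^sub>\<infinity>k. alt_inv_quadratic a b c n k)"
      using b by simp
  qed
  thus ?thesis by (simp only: infsum_cmult_right')
qed

theorem mainTheorem1:
  fixes \<alpha> \<beta> :: real
  assumes "\<alpha> > 0" and "\<beta> > 0"
  shows "f \<alpha> \<beta> = f (1 / \<alpha>) \<beta>"
proof -
  define S where "S p q = (\<Sum>\<^sub>\<infinity>n. \<Sum>\<^sub>\<infinity>k. alt_inv_quadratic p q (\<beta>\<^sup>2) n k)" for p q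
  have "f \<alpha> \<beta> = \<alpha> * (1 / \<alpha>) / pi * S \<alpha> (1 / \<alpha>)"
    unfolding S_def using assms
    by (intro f_eq_infsum_alt_inv_quadratic) (simp_all add: power2_eq_square)
  moreover have "f (1 / \<alpha>) \<beta> = 1 / \<alpha> * \<alpha> / pi * S (1 / \<alpha>) \<alpha>"
    unfolding S_def using assms
    by (intro f_eq_infsum_alt_inv_quadratic) (simp_all add: power2_eq_square)
  moreover have "S \<alpha> (1 / \<alpha>) = (\<Sum>\<^sub>\<infinity>k. \<Sum>\<^sub>\<infinity>n. alt_inv_quadratic \<alpha> (1 / \<alpha>) (\<beta>\<^sup>2) n k)"
    unfolding S_def using assms by (intro infsum_alt_inv_quadratic_swap) simp_all
  moreover have "\<dots> = S (1 / \<alpha>) \<alpha>"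
    unfolding S_def alt_inv_quadratic_swap[of \<alpha>] ..
  ultimately show ?thesis using assms by simp
qed

end
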